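(* Let $A,B,C,D$ be real random variables on a common probability space with finite second moments, $\mathrm{Var}(B)>0$, $\mathrm{Var}(D)>0$, $|\mathrm{Corr}(B,D)|<1$, $\mathbb{E}[A]\neq0$, $\mathbb{E}[C]\neq 0$, and set $R=\mathbb{E}[A]/\mathbb{E}[C]$. Let $n\ge1$ and let $(A_i,B_i,C_i,D_i)_{i=1,\dots,n}$ be i.i.d. copies of $(A,B,C,D)$. For $\alpha,\beta\in\mathbb{R}$ put $N_\alpha=\overline{A_n}+\alpha(\mathbb{E}[B]-\overline{B_n})$ and $M_\beta=\overline{C_n}+\beta(\mathbb{E}[D]-\overline{D_n})$. Then the function $(\alpha,\beta)\mapsto\Phi(N_\alpha,M_\beta)$ on $\mathbb{R}^2$ has a unique minimizer $(\alpha_o,\beta_o)$, given by $$\alpha_o=\frac{\mathrm{Var}(D)\mathrm{Cov}(A,B)-R\,\mathrm{Var}(D)\mathrm{Cov}(B,C)+R\,\mathrm{Cov}(B,D)\mathrm{Cov}(C,D)-\mathrm{Cov}(B,D)\mathrm{Cov}(A,D)}{\mathrm{Var}(B)\mathrm{Var}(D)-\mathrm{Cov}(B,D)^2},$$ $$\beta_o=\frac{\mathrm{Cov}(B,D)\mathrm{Cov}(A,B)-R\,\mathrm{Cov}(B,D)\mathrm{Cov}(B,C)+R\,\mathrm{Var}(B)\mathrm{Cov}(C,D)-\mathrm{Var}(B)\mathrm{Cov}(A,D)}{R\big(\mathrm{Var}(B)\mathrm{Var}(D)-\mathrm{Cov}(B,D)^2\big)},$$ and in particular $\Phi(N_{\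alpha_o},M_{\beta_o})\le\Phi(\overline{A_n},\overline{C_n})$.
   Context: For a random variable $X$, $\overline{X_n}=\frac1n\sum_{i=1}^n X_i$ denotes the sample mean of the i.i.d. copies $X_1,\dots,X_n$. For real random variables $X,Z$ with finite second moments and $\mathbb{E}[Z]\neq0$, define the first-order (delta-method) approximation of the variance of the ratio $X/Z$: $$\Phi(X,Z)=\frac{\mathrm{Var}(X)}{\mathbb{E}[Z]^2}+\frac{\mathbb{E}[X]^2}{\mathbb{E}[Z]^4}\mathrm{Var}(Z)-2\frac{\mathbb{E}[X]}{\mathbb{E}[Z]^3}\mathrm{Cov}(X,Z).$$ $\Phi(N_\alpha,M_\beta)$ is the paper's variance of the CV/CV ratio estimator $N_\alpha/M_\beta$ of $R$, and $\Phi(\overline{A_n},\overline{C_n})=\Phi(N_0,M_0)$ is that of the Monte Carlo ratio estimator $\overline{A_n}/\overline{C_n}$; $\mathbb{E}[B],\mathbb{E}[D]$ are known constants. $\mathrm{Corr}(B,D)=\mathrm{Cov}(B,D)/\sqrt{\mathrm{Var}(B)\mathrm{Var}(D)}$. *)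

theory Defs
  imports "HOL-Probability.Probability"
begin

definition expect :: "'a measure \<Rightarrow> ('a \<Rightarrow> real) \<Rightarrow> real" where
  "expect M X = (\<integral>\<omega>. X \<omega> \<partial>M)"

definition cov :: "'a measure \<Rightarrow> ('a \<Rightarrow> real) \<Rightarrow> ('a \<Rightarrow> real) \<Rightarrow> real" where
  "cov M X Y = (\<integral>\<omega>. (X \<omega> - expect M X) * (Y \<omega> - expect M Y) \<partial>M)"

definition var :: "'a measure \<Rightarrow> ('a \<Rightarrow> real) \<Rightarrow> real" where
  "var M X = (\<integral>\<omega>. (X \<omega> - expect M X)^2 \<partial>M)"

definition corr :: "'a measure \<Rightarrow> ('a \<Rightarrow> real) \<Rightarrow> ('a \<Rightarrow> real) \<Rightarrow> real" where
  "corr M X Y = cov M X Y / sqrt (var M X * var M Y)"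

text \<open>First-order (delta-method) approximation of the variance of X/Z.\<close>
definition Phi :: "'a measure \<Rightarrow> ('a \<Rightarrow> real) \<Rightarrow> ('a \<Rightarrow> real) \<Rightarrow> real" where
  "Phi M X Z = var M X / (expect M Z)^2
              + (expect M X)^2 / (expect M Z)^4 * var M Z
              - 2 * expect M X / (expect M Z)^3 * cov M X Z"

definition smean :: "nat \<Rightarrow> (nat \<Rightarrow> 'a \<Rightarrow> real) \<Rightarrow> 'a \<Rightarrow> real" where
  "smean n X \<omega> = (\<Sum>i<n. X i \<omega>) / real n"

end

theory Submission
  imports Defs
begin

text \<open>
  With \<open>R = E X / E Z\<close> one has \<open>\<Phi>(X, Z) = Var(X - R Z) / E[Z]\<^sup>2\<close>. The control variates do not
  change the means, \<open>E N\<^sub>\<alpha> = E A\<close> and \<open>E M\<^sub>\<beta> = E C\<close>, and \<open>N\<^sub>\<alpha> - R M\<^sub>\<beta>\<close> is, up to an additive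
  constant, the sample mean of \<open>n\<close> i.i.d. copies of \<open>U - \<alpha> B + R \<beta> D\<close> with \<open>U = A - R C\<close>. Hence
  \<open>\<Phi>(N\<^sub>\<alpha>, M\<^sub>\<beta>) = Var(U - \<alpha> B + R \<beta> D) / (n E[C]\<^sup>2)\<close>, and minimising it over \<open>(\<alpha>, R \<beta>)\<close> is the
  least-squares regression of \<open>U\<close> on \<open>B\<close> and \<open>D\<close>: a quadratic whose form is the covariance matrix
  of \<open>B\<close> and \<open>D\<close>, positive definite since \<open>|Corr(B, D)| < 1\<close>. Its normal equations give the
  unique minimiser, and comparing with \<open>\<alpha> = \<beta> = 0\<close> gives the inequality.
\<close>

section \<open>Square-integrable random variables\<close>

definition square_integrable :: "'a measure \<Rightarrow> ('a \<Rightarrow> real) \<Rightarrow> bool" where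
  "square_integrable M X \<longleftrightarrow> X \<in> borel_measurable M \<and> integrable M (\<lambda>\<omega>. (X \<omega>)^2)"

lemma integrable_mult_square_integrable:
  assumes "square_integrable M X" "square_integrable M Y"
  shows "integrable M (\<lambda>\<omega>. X \<omega> * Y \<omega>)"
proof (rule Bochner_Integration.integrable_bound)
  show "integrable M (\<lambda>\<omega>. (X \<omega>)^2 + (Y \<omega>)^2)"
    using assms unfolding square_integrable_def by auto
  show "AE \<omega> in M. norm (X \<omega> * Y \<omega>) \<le> norm ((X \<omega>)^2 + (Y \<omega>)^2)"
  proof (intro AE_I2)
    fix \<omega>
    have "norm (X \<omega> * Y \<omega>) = \<bar>X \<omega>\<bar> * \<bar>Y \<omega>\<bar>"
      by (simp add: abs_mult)
    also have "\<dots> \<le> (X \<omega>)^2 + (Y \<omega>)^2"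
    proof -
      have "2 * \<bar>X \<omega>\<bar> * \<bar>Y \<omega>\<bar> \<le> (X \<omega>)^2 + (Y \<omega>)^2"
        using sum_squares_bound[of "\<bar>X \<omega>\<bar>" "\<bar>Y \<omega>\<bar>"] by simp
      moreover have "0 \<le> \<bar>X \<omega>\<bar> * \<bar>Y \<omega>\<bar>" by simp
      ultimately show ?thesis by linarith
    qed
    finally show "norm (X \<omega> * Y \<omega>) \<le> norm ((X \<omega>)^2 + (Y \<omega>)^2)"
      by simp
  qed
qed (use assms in \<open>auto simp: square_integrable_def\<close>)

lemma square_integrable_add:
  assumes "square_integrable M X" "square_integrable M Y"
  shows "square_integrable M (\<lambda>\<omega>. X \<omega> + Y \<omega>)"
proof -
  have "(\<lambda>\<omega>. (X \<omega> + Y \<omega>)^2) = (\<lambda>\<omega>. (X \<omega>)^2 + 2 * (X \<omega> * Y \<omega>) + (Y \<omega>)^2)"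
    by (simp add: power2_sum algebra_simps)
  then show ?thesis
    using assms integrable_mult_square_integrable[OF assms] unfolding square_integrable_def by auto
qed

lemma square_integrable_cmult:
  "square_integrable M X \<Longrightarrow> square_integrable M (\<lambda>\<omega>. c * X \<omega>)"
  unfolding square_integrable_def by (auto simp: power_mult_distrib intro!: borel_measurable_times)

lemma square_integrable_sum:
  assumes "\<And>k. k \<in> I \<Longrightarrow> square_integrable M (X k)"
  shows "square_integrable M (\<lambda>\<omega>. \<Sum>k\<in>I. X k \<omega>)"
  using assms
proof (induction I rule: infinite_finite_induct)
  case (insert k I)
  then show ?case by (simp add: square_integrable_add)
qed (simp_all add: square_integrable_def)

lemma cov_commute: "cov M X Y = cov M Y X"
  unfolding cov_def by (simp add: mult.commute)

lemma cov_self: "cov M X X = var M X"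
  unfolding cov_def var_def by (simp add: power2_eq_square)

lemma expect_weighted_sum:
  assumes "\<And>k. k \<in> I \<Longrightarrow> integrable M (X k)"
  shows "expect M (\<lambda>\<omega>. \<Sum>k\<in>I. w k * X k \<omega>) = (\<Sum>k\<in>I. w k * expect M (X k))"
  unfolding expect_def using assms by (simp add: Bochner_Integration.integral_sum)

context prob_space
begin

lemma square_integrable_const: "square_integrable M (\<lambda>_. c)"
  unfolding square_integrable_def by simp

lemma square_integrable_integrable: "square_integrable M X \<Longrightarrow> integrable M X"
  unfolding square_integrable_def by (blast intro: square_integrable_imp_integrable)

lemma expect_add_const: "integrable M X \<Longrightarrow> expect M (\<lambda>\<omega>. X \<omega> + c) = expect M X + c"
  unfolding expect_def by (simp add: prob_space)

lemma var_add_const: "integrable M X \<Longrightarrow> var M (\<lambda>\<omega>. X \<omega> + c) = var M X"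
  unfolding var_def by (simp add: expect_add_const)

lemma var_weighted_sum:
  assumes "finite I" and X: "\<And>k. k \<in> I \<Longrightarrow> square_integrable M (X k)"
  shows "var M (\<lambda>\<omega>. \<Sum>k\<in>I. w k * X k \<omega>) = (\<Sum>k\<in>I. \<Sum>l\<in>I. w k * w l * cov M (X k) (X l))"
proof -
  define Y where "Y k = (\<lambda>\<omega>. X k \<omega> - expect M (X k))" for k
  have Y: "square_integrable M (Y k)" if "k \<in> I" for k
    using square_integrable_add[OF X[OF that] square_integrable_const, of "- expect M (X k)"]
    by (simp add: Y_def)
  have "expect M (\<lambda>\<omega>. \<Sum>k\<in>I. w k * X k \<omega>) = (\<Sum>k\<in>I. w k * expect M (X k))"
    using X square_integrable_integrable by (simp add: expect_weighted_sum)
  then have "var M (\<lambda>\<omega>. \<Sum>k\<in>I. w k * X k \<omega>) = (\<integral>\<omega>. (\<Sum>k\<in>I. w k * Y k \<omega>)^2 \<partial>M)"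
    unfolding var_def Y_def by (simp add: right_diff_distrib sum_subtractf)
  also have "\<dots> = (\<integral>\<omega>. (\<Sum>k\<in>I. \<Sum>l\<in>I. w k * w l * (Y k \<omega> * Y l \<omega>)) \<partial>M)"
    by (simp add: power2_eq_square sum_product algebra_simps)
  also have "\<dots> = (\<Sum>k\<in>I. \<Sum>l\<in>I. w k * w l * (\<integral>\<omega>. Y k \<omega> * Y l \<omega> \<partial>M))"
    using Y by (simp add: Bochner_Integration.integral_sum integrable_mult_square_integrable)
  finally show ?thesis
    unfolding cov_def Y_def .
qed

lemma var_diff_scaled:
  assumes "square_integrable M X" "square_integrable M Z"
  shows "var M (\<lambda>\<omega>. X \<omega> - r * Z \<omega>) = var M X + r^2 * var M Z - 2 * r * cov M X Z"
proof -
  have "square_integrable M ([X, Z] ! k)" if "k \<in> {..<2}" for k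
    using assms that by (auto simp: numeral_2_eq_2 less_Suc_eq)
  from var_weighted_sum[of "{..<2}" "\<lambda>k. [X, Z] ! k" "\<lambda>k. [1, - r] ! k", OF finite_lessThan this]
  show ?thesis
    by (simp add: lessThan_Suc numeral_2_eq_2 cov_self cov_commute[of M Z] power2_eq_square)
qed

lemma var_linear_combination3:
  assumes "square_integrable M X" "square_integrable M Y" "square_integrable M Z"
  shows "var M (\<lambda>\<omega>. a * X \<omega> + b * Y \<omega> + c * Z \<omega>) =
           a^2 * var M X + b^2 * var M Y + c^2 * var M Z
         + 2*a*b * cov M X Y + 2*a*c * cov M X Z + 2*b*c * cov M Y Z"
proof -
  have "square_integrable M ([X, Y, Z] ! k)" if "k \<in> {..<3}" for k
    using assms that by (auto simp: eval_nat_numeral less_Suc_eq)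
  from var_weighted_sum[of "{..<3}" "\<lambda>k. [X, Y, Z] ! k" "\<lambda>k. [a, b, c] ! k", OF finite_lessThan this]
  show ?thesis
    by (simp add: lessThan_Suc eval_nat_numeral cov_self cov_commute[of M Y X]
        cov_commute[of M Z X] cov_commute[of M Z Y] power2_eq_square algebra_simps)
qed

lemma cov_diff_scaled_left:
  assumes "square_integrable M X" "square_integrable M Z" "square_integrable M Y"
  shows "cov M (\<lambda>\<omega>. X \<omega> - r * Z \<omega>) Y = cov M X Y - r * cov M Z Y"
proof -
  define cX where "cX = (\<lambda>\<omega>. X \<omega> - expect M X)"
  define cZ where "cZ = (\<lambda>\<omega>. Z \<omega> - expect M Z)"
  define cY where "cY = (\<lambda>\<omega>. Y \<omega> - expect M Y)"
  have sq: "square_integrable M cX" "square_integrable M cZ" "square_integrable M cY"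
    unfolding cX_def cZ_def cY_def
    using square_integrable_add[OF assms(1) square_integrable_const, of "- expect M X"]
      square_integrable_add[OF assms(2) square_integrable_const, of "- expect M Z"]
      square_integrable_add[OF assms(3) square_integrable_const, of "- expect M Y"]
    by simp_all
  have E: "expect M (\<lambda>\<omega>. X \<omega> - r * Z \<omega>) = expect M X - r * expect M Z"
    using assms(1,2) square_integrable_integrable unfolding expect_def by simp
  have "cov M (\<lambda>\<omega>. X \<omega> - r * Z \<omega>) Y = (\<integral>\<omega>. cX \<omega> * cY \<omega> - r * (cZ \<omega> * cY \<omega>) \<partial>M)"
    unfolding cov_def E cX_def cY_def cZ_def
    by (intro Bochner_Integration.integral_cong) (simp_all add: algebra_simps)
  also have "\<dots> = cov M X Y - r * cov M Z Y"
    using sq by (simp add: integrable_mult_square_integrable cov_def cX_def cY_def cZ_def)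
  finally show ?thesis .
qed

lemma Phi_eq_var_residual:
  assumes "square_integrable M X" "square_integrable M Z" "expect M Z \<noteq> 0"
  shows "Phi M X Z = var M (\<lambda>\<omega>. X \<omega> - expect M X / expect M Z * Z \<omega>) / (expect M Z)^2"
  unfolding Phi_def var_diff_scaled[OF assms(1,2)]
  using assms(3) by (simp add: power_divide field_simps eval_nat_numeral)

end

section \<open>Sample means of i.i.d. copies\<close>

lemma integral_comp_eq_if_distr_eq:
  fixes f :: "'b \<Rightarrow> real"
  assumes "X \<in> measurable M S" "Y \<in> measurable M S" "distr M S X = distr M S Y"
    and "f \<in> borel_measurable S"
  shows "integrable M (\<lambda>\<omega>. f (X \<omega>)) \<longleftrightarrow> integrable M (\<lambda>\<omega>. f (Y \<omega>))"
    and "(\<integral>\<omega>. f (X \<omega>) \<partial>M) = (\<integral>\<omega>. f (Y \<omega>) \<partial>M)"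
  using integrable_distr_eq[OF assms(1,4)] integrable_distr_eq[OF assms(2,4)]
    integral_distr[OF assms(1,4)] integral_distr[OF assms(2,4)] assms(3)
  by simp_all

lemma smean_eq_weighted_sum: "smean n X = (\<lambda>\<omega>. \<Sum>i<n. 1 / real n * X i \<omega>)"
  unfolding smean_def by (simp add: fun_eq_iff sum_divide_distrib)

lemma square_integrable_smean:
  "(\<And>i. i < n \<Longrightarrow> square_integrable M (X i)) \<Longrightarrow> square_integrable M (smean n X)"
  unfolding smean_eq_weighted_sum by (intro square_integrable_sum square_integrable_cmult) auto

lemma expect_smean:
  assumes "\<And>i. i < n \<Longrightarrow> integrable M (X i)" "\<And>i. i < n \<Longrightarrow> expect M (X i) = m" "n \<ge> 1"
  shows "expect M (smean n X) = m"
proof -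
  have "expect M (smean n X) = (\<Sum>i<n. 1 / real n * expect M (X i))"
    unfolding smean_eq_weighted_sum using assms(1) by (intro expect_weighted_sum) auto
  then show ?thesis
    using assms(2,3) by simp
qed

context prob_space
begin

lemma cov_eq_0_if_indep_vars:
  assumes indep: "indep_vars (\<lambda>_. borel) X I" and "i \<in> I" "j \<in> I" "i \<noteq> j"
    and "integrable M (X i)" "integrable M (X j)"
  shows "cov M (X i) (X j) = 0"
proof -
  define Y where "Y k = (\<lambda>\<omega>. X k \<omega> - expect M (X k))" for k
  have "indep_vars (\<lambda>_. borel) Y I"
    unfolding Y_def by (rule indep_vars_compose2[OF indep]) simp
  then have "indep_vars (\<lambda>_. borel) Y {i, j}"
    by (rule indep_vars_subset) (use assms in auto)
  moreover have Y: "integrable M (Y k)" if "k \<in> {i, j}" for k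
    using assms that by (auto simp: Y_def)
  ultimately have "(\<integral>\<omega>. (\<Prod>k\<in>{i, j}. Y k \<omega>) \<partial>M) = (\<Prod>k\<in>{i, j}. \<integral>\<omega>. Y k \<omega> \<partial>M)"
    by (intro indep_vars_lebesgue_integral) auto
  moreover have "(\<integral>\<omega>. Y i \<omega> \<partial>M) = 0"
    using assms(5) by (simp add: Y_def expect_def prob_space)
  ultimately show ?thesis
    using \<open>i \<noteq> j\<close> by (simp add: cov_def Y_def)
qed

lemma var_smean_uncorrelated:
  assumes X: "\<And>i. i < n \<Longrightarrow> square_integrable M (X i)"
    and uncorrelated: "\<And>i j. i < n \<Longrightarrow> j < n \<Longrightarrow> i \<noteq> j \<Longrightarrow> cov M (X i) (X j) = 0"
    and var: "\<And>i. i < n \<Longrightarrow> var M (X i) = v" and "n \<ge> 1"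
  shows "var M (smean n X) = v / n"
proof -
  have "var M (smean n X) = (\<Sum>i<n. \<Sum>j<n. 1 / real n * (1 / real n) * cov M (X i) (X j))"
    unfolding smean_eq_weighted_sum using X by (intro var_weighted_sum) auto
  also have "\<dots> = (\<Sum>i<n. 1 / real n * (1 / real n) * v)"
  proof (intro sum.cong refl)
    fix i assume "i \<in> {..<n}"
    then have "(\<Sum>j<n. 1 / real n * (1 / real n) * cov M (X i) (X j)) =
        (\<Sum>j<n. if j = i then 1 / real n * (1 / real n) * v else 0)"
      using uncorrelated var by (intro sum.cong) (auto simp: cov_self)
    with \<open>i \<in> {..<n}\<close> show "(\<Sum>j<n. 1 / real n * (1 / real n) * cov M (X i) (X j)) =
        1 / real n * (1 / real n) * v"
      by simp
  qed
  also have "\<dots> = v / n"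
    using \<open>n \<ge> 1\<close> by simp
  finally show ?thesis .
qed

lemma smean_iid:
  fixes g :: "'b \<Rightarrow> real"
  assumes T: "T \<in> measurable M S" and Ts: "\<And>i. i < n \<Longrightarrow> Ts i \<in> measurable M S"
    and ident: "\<And>i. i < n \<Longrightarrow> distr M S (Ts i) = distr M S T"
    and indep: "indep_vars (\<lambda>_. S) Ts {..<n}"
    and g: "g \<in> borel_measurable S" and sq: "square_integrable M (\<lambda>\<omega>. g (T \<omega>))"
    and n: "n \<ge> 1"
  shows square_integrable_smean_iid: "square_integrable M (smean n (\<lambda>i \<omega>. g (Ts i \<omega>)))"
    and expect_smean_iid: "expect M (smean n (\<lambda>i \<omega>. g (Ts i \<omega>))) = expect M (\<lambda>\<omega>. g (T \<omega>))"
    and var_smean_iid: "var M (smean n (\<lambda>i \<omega>. g (Ts i \<omega>))) = var M (\<lambda>\<omega>. g (T \<omega>)) / n"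
proof -
  define X where "X = (\<lambda>i \<omega>. g (Ts i \<omega>))"
  define m where "m = expect M (\<lambda>\<omega>. g (T \<omega>))"
  have g2: "(\<lambda>x. (g x)^2) \<in> borel_measurable S" "(\<lambda>x. (g x - m)^2) \<in> borel_measurable S"
    using g by measurable
  have X: "square_integrable M (X i)" if "i < n" for i
    using sq measurable_compose[OF Ts[OF that] g]
      integral_comp_eq_if_distr_eq(1)[OF Ts[OF that] T ident[OF that] g2(1)]
    unfolding square_integrable_def X_def by (simp add: comp_def)
  have EX: "expect M (X i) = m" if "i < n" for i
    unfolding expect_def X_def m_def by (rule integral_comp_eq_if_distr_eq(2)[OF Ts[OF that] T ident[OF that] g])
  have VX: "var M (X i) = var M (\<lambda>\<omega>. g (T \<omega>))" if "i < n" for i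
    unfolding var_def EX[OF that] m_def[symmetric] unfolding X_def
    by (rule integral_comp_eq_if_distr_eq(2)[OF Ts[OF that] T ident[OF that] g2(2)])
  have "indep_vars (\<lambda>_. borel) X {..<n}"
    unfolding X_def by (rule indep_vars_compose2[OF indep g])
  then have CX: "cov M (X i) (X j) = 0" if "i < n" "j < n" "i \<noteq> j" for i j
    using that X by (auto intro!: cov_eq_0_if_indep_vars square_integrable_integrable)
  show "square_integrable M (smean n X)"
    using X by (rule square_integrable_smean)
  show "expect M (smean n X) = m"
    using X square_integrable_integrable EX n by (blast intro: expect_smean)
  show "var M (smean n X) = var M (\<lambda>\<omega>. g (T \<omega>)) / n"
    using X CX VX n by (rule var_smean_uncorrelated)
qed

end

section \<open>Minimising a positive definite quadratic\<close>

lemma positive_definite_quadratic_form: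
  fixes a b c u v :: real
  assumes "a > 0" "b^2 < a * c"
  shows "a * u^2 + 2 * b * u * v + c * v^2 \<ge> 0"
    and "a * u^2 + 2 * b * u * v + c * v^2 = 0 \<Longrightarrow> u = 0 \<and> v = 0"
proof -
  have completed: "a * (a * u^2 + 2 * b * u * v + c * v^2) = (a * u + b * v)^2 + (a * c - b^2) * v^2"
    by (simp add: algebra_simps power2_eq_square)
  have "0 \<le> a * (a * u^2 + 2 * b * u * v + c * v^2)"
    unfolding completed using assms by simp
  then show "a * u^2 + 2 * b * u * v + c * v^2 \<ge> 0"
    using assms(1) by (simp add: zero_le_mult_iff)
  assume "a * u^2 + 2 * b * u * v + c * v^2 = 0"
  then have "(a * u + b * v)^2 + (a * c - b^2) * v^2 = 0"
    using completed by simp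
  moreover have "0 \<le> (a * c - b^2) * v^2"
    using assms by simp
  moreover have "0 \<le> (a * u + b * v)^2"
    by simp
  ultimately have "(a * c - b^2) * v^2 = 0" and "(a * u + b * v)^2 = 0"
    by linarith+
  with assms show "u = 0 \<and> v = 0"
    by simp
qed

lemma quadratic_unique_minimizer:
  fixes f :: "real \<Rightarrow> real \<Rightarrow> real"
  assumes "a > 0" "b^2 < a * c"
    and f: "\<And>x y. f x y = a * x^2 + 2 * b * x * y + c * y^2 + 2 * d * x + 2 * e * y + k"
  defines "x0 \<equiv> (b * e - c * d) / (a * c - b^2)" and "y0 \<equiv> (b * d - a * e) / (a * c - b^2)"
  shows "f x0 y0 \<le> f x y"
    and "f x y \<le> f x0 y0 \<Longrightarrow> x = x0 \<and> y = y0"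
proof -
  have "a * (b * e - c * d) + b * (b * d - a * e) + d * (a * c - b^2) = 0"
    and "b * (b * e - c * d) + c * (b * d - a * e) + e * (a * c - b^2) = 0"
    by (simp_all add: algebra_simps power2_eq_square)
  moreover have "a * c - b^2 \<noteq> 0"
    using assms(2) by simp
  ultimately have stationary: "a * x0 + b * y0 + d = 0" "b * x0 + c * y0 + e = 0"
    unfolding x0_def y0_def by (simp_all add: divide_simps)
  have "f x y = f x0 y0 + (a * (x - x0)^2 + 2 * b * (x - x0) * (y - y0) + c * (y - y0)^2)
      + 2 * (x - x0) * (a * x0 + b * y0 + d) + 2 * (y - y0) * (b * x0 + c * y0 + e)"
    unfolding f by (simp add: algebra_simps power2_eq_square)
  then have excess: "f x y = f x0 y0 + (a * (x - x0)^2 + 2 * b * (x - x0) * (y - y0) + c * (y - y0)^2)"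
    using stationary by simp
  then show "f x0 y0 \<le> f x y"
    using positive_definite_quadratic_form(1)[OF assms(1,2)] by simp
  assume "f x y \<le> f x0 y0"
  with excess have "a * (x - x0)^2 + 2 * b * (x - x0) * (y - y0) + c * (y - y0)^2 = 0"
    using positive_definite_quadratic_form(1)[OF assms(1,2), of "x - x0" "y - y0"] by simp
  from positive_definite_quadratic_form(2)[OF assms(1,2) this] show "x = x0 \<and> y = y0"
    by simp
qed

lemma Collect_minimizers_eq_singleton:
  fixes f :: "'a \<Rightarrow> 'b::order"
  assumes "\<And>q. f p \<le> f q" "\<And>q. f q \<le> f p \<Longrightarrow> q = p"
  shows "{p'. \<forall>q. f p' \<le> f q} = {p}"
  using assms by blast

section \<open>Optimal control variates\<close>

lemma cov_sq_less_if_abs_corr_less: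
  assumes "var M X > 0" "var M Y > 0" "\<bar>corr M X Y\<bar> < 1"
  shows "(cov M X Y)^2 < var M X * var M Y"
proof -
  have "(corr M X Y)^2 < 1"
    using assms(3) by (simp add: abs_square_less_1)
  then show ?thesis
    using assms(1,2) by (simp add: corr_def power_divide)
qed

context prob_space
begin

lemma var_control_variates_unique_minimizer:
  assumes "square_integrable M U" "square_integrable M B" "square_integrable M D"
    and "var M B > 0" "(cov M B D)^2 < var M B * var M D"
  defines "x0 \<equiv> (var M D * cov M U B - cov M B D * cov M U D) / (var M B * var M D - (cov M B D)^2)"
    and "y0 \<equiv> (cov M B D * cov M U B - var M B * cov M U D) / (var M B * var M D - (cov M B D)^2)"
  shows "var M (\<lambda>\<omega>. U \<omega> - x0 * B \<omega> + y0 * D \<omega>) \<le> var M (\<lambda>\<omega>. U \<omega> - x * B \<omega> + y * D \<omega>)"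
    and "var M (\<lambda>\<omega>. U \<omega> - x * B \<omega> + y * D \<omega>) \<le> var M (\<lambda>\<omega>. U \<omega> - x0 * B \<omega> + y0 * D \<omega>)
           \<Longrightarrow> x = x0 \<and> y = y0"
proof -
  define f where "f x y = var M (\<lambda>\<omega>. U \<omega> - x * B \<omega> + y * D \<omega>)" for x y
  have "f x y = var M B * x^2 + 2 * (- cov M B D) * x * y + var M D * y^2
      + 2 * (- cov M U B) * x + 2 * cov M U D * y + var M U" for x y
    using var_linear_combination3[OF assms(1-3), of 1 "- x" y]
    by (simp add: f_def algebra_simps power2_eq_square)
  from quadratic_unique_minimizer[of "var M B" "- cov M B D" "var M D", OF _ _ this] assms(4,5)
  show "f x0 y0 \<le> f x y" and "f x y \<le> f x0 y0 \<Longrightarrow> x = x0 \<and> y = y0"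
    unfolding x0_def y0_def by (simp_all add: algebra_simps)
qed

lemma optimal_control_variates:
  assumes sq: "square_integrable M A" "square_integrable M B" "square_integrable M C" "square_integrable M D"
    and "var M B > 0" "(cov M B D)^2 < var M B * var M D" and "expect M A \<noteq> 0" "expect M C \<noteq> 0"
  defines "R \<equiv> expect M A / expect M C"
  defines "\<alpha>\<^sub>o \<equiv> (var M D * cov M A B - R * var M D * cov M B C + R * cov M B D * cov M C D
                 - cov M B D * cov M A D) / (var M B * var M D - (cov M B D)^2)"
    and "\<beta>\<^sub>o \<equiv> (cov M B D * cov M A B - R * cov M B D * cov M B C + R * var M B * cov M C D
                 - var M B * cov M A D) / (R * (var M B * var M D - (cov M B D)^2))"
  shows "var M (\<lambda>\<omega>. A \<omega> - R * C \<omega> - \<alpha>\<^sub>o * B \<omega> + R * \<beta>\<^sub>o * D \<omega>)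
           \<le> var M (\<lambda>\<omega>. A \<omega> - R * C \<omega> - \<alpha> * B \<omega> + R * \<beta> * D \<omega>)"
    and "var M (\<lambda>\<omega>. A \<omega> - R * C \<omega> - \<alpha> * B \<omega> + R * \<beta> * D \<omega>)
           \<le> var M (\<lambda>\<omega>. A \<omega> - R * C \<omega> - \<alpha>\<^sub>o * B \<omega> + R * \<beta>\<^sub>o * D \<omega>) \<Longrightarrow> \<alpha> = \<alpha>\<^sub>o \<and> \<beta> = \<beta>\<^sub>o"
proof -
  define U where "U = (\<lambda>\<omega>. A \<omega> - R * C \<omega>)"
  have sqU: "square_integrable M U"
    using square_integrable_add[OF sq(1) square_integrable_cmult[OF sq(3), of "- R"]] by (simp add: U_def)
  have cov_U: "cov M U B = cov M A B - R * cov M B C" "cov M U D = cov M A D - R * cov M C D"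
    unfolding U_def using cov_diff_scaled_left[OF sq(1,3)] sq by (simp_all add: cov_commute[of M C B])
  have R: "R \<noteq> 0"
    using assms(7,8) by (simp add: R_def)
  have coefficients:
    "(var M D * cov M U B - cov M B D * cov M U D) / (var M B * var M D - (cov M B D)^2) = \<alpha>\<^sub>o"
    "(cov M B D * cov M U B - var M B * cov M U D) / (var M B * var M D - (cov M B D)^2) = R * \<beta>\<^sub>o"
    unfolding cov_U \<alpha>\<^sub>o_def \<beta>\<^sub>o_def using R assms(6) by (simp_all add: field_simps)
  note opt = var_control_variates_unique_minimizer[OF sqU sq(2,4) assms(5,6), unfolded coefficients]
  show "var M (\<lambda>\<omega>. A \<omega> - R * C \<omega> - \<alpha>\<^sub>o * B \<omega> + R * \<beta>\<^sub>o * D \<omega>)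
      \<le> var M (\<lambda>\<omega>. A \<omega> - R * C \<omega> - \<alpha> * B \<omega> + R * \<beta> * D \<omega>)"
    using opt(1)[of \<alpha> "R * \<beta>"] by (simp add: U_def)
  assume "var M (\<lambda>\<omega>. A \<omega> - R * C \<omega> - \<alpha> * B \<omega> + R * \<beta> * D \<omega>)
      \<le> var M (\<lambda>\<omega>. A \<omega> - R * C \<omega> - \<alpha>\<^sub>o * B \<omega> + R * \<beta>\<^sub>o * D \<omega>)"
  with opt(2)[of \<alpha> "R * \<beta>"] R show "\<alpha> = \<alpha>\<^sub>o \<and> \<beta> = \<beta>\<^sub>o"
    by (simp add: U_def)
qed

lemma smean_linear_combination_iid:
  fixes A B C D :: "'a \<Rightarrow> real" and As Bs Cs Ds :: "nat \<Rightarrow> 'a \<Rightarrow> real" and a b c d :: real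
  assumes sq: "square_integrable M A" "square_integrable M B" "square_integrable M C" "square_integrable M D"
    and meas_copies: "\<And>i. i < n \<Longrightarrow> As i \<in> borel_measurable M \<and> Bs i \<in> borel_measurable M
                                 \<and> Cs i \<in> borel_measurable M \<and> Ds i \<in> borel_measurable M"
    and indep: "indep_vars (\<lambda>i. borel \<Otimes>\<^sub>M borel \<Otimes>\<^sub>M borel \<Otimes>\<^sub>M borel)
                  (\<lambda>i \<omega>. (As i \<omega>, Bs i \<omega>, Cs i \<omega>, Ds i \<omega>)) {..<n}"
    and ident: "\<And>i. i < n \<Longrightarrow>
                  distr M (borel \<Otimes>\<^sub>M borel \<Otimes>\<^sub>M borel \<Otimes>\<^sub>M borel) (\<lambda>\<omega>. (As i \<omega>, Bs i \<omega>, Cs i \<omega>, Ds i \<omega>))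
                = distr M (borel \<Otimes>\<^sub>M borel \<Otimes>\<^sub>M borel \<Otimes>\<^sub>M borel) (\<lambda>\<omega>. (A \<omega>, B \<omega>, C \<omega>, D \<omega>))"
    and n: "n \<ge> 1"
  defines "S \<equiv> \<lambda>\<omega>. a * smean n As \<omega> + b * smean n Bs \<omega> + c * smean n Cs \<omega> + d * smean n Ds \<omega>"
  shows "square_integrable M S"
    and "expect M S = a * expect M A + b * expect M B + c * expect M C + d * expect M D"
    and "var M S = var M (\<lambda>\<omega>. a * A \<omega> + b * B \<omega> + c * C \<omega> + d * D \<omega>) / n"
proof -
  let ?S = "borel \<Otimes>\<^sub>M borel \<Otimes>\<^sub>M borel \<Otimes>\<^sub>M borel :: (real \<times> real \<times> real \<times> real) measure"
  define T where "T = (\<lambda>\<omega>. (A \<omega>, B \<omega>, C \<omega>, D \<omega>))"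
  define Ts where "Ts = (\<lambda>i \<omega>. (As i \<omega>, Bs i \<omega>, Cs i \<omega>, Ds i \<omega>))"
  define lin :: "real \<times> real \<times> real \<times> real \<Rightarrow> real"
    where "lin = (\<lambda>(x1, x2, x3, x4). a * x1 + b * x2 + c * x3 + d * x4)"
  have T: "T \<in> measurable M ?S"
    using sq unfolding square_integrable_def T_def by (auto intro!: measurable_Pair)
  have Ts: "Ts i \<in> measurable M ?S" if "i < n" for i
    using meas_copies[OF that] unfolding Ts_def by (auto intro!: measurable_Pair)
  have lin: "lin \<in> borel_measurable ?S"
    unfolding lin_def by measurable
  have lin_T: "(\<lambda>\<omega>. lin (T \<omega>)) = (\<lambda>\<omega>. a * A \<omega> + b * B \<omega> + c * C \<omega> + d * D \<omega>)"
    by (simp add: lin_def T_def)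
  have sq_lin: "square_integrable M (\<lambda>\<omega>. lin (T \<omega>))"
    unfolding lin_T using sq by (intro square_integrable_add square_integrable_cmult)
  have iid: "i < n \<Longrightarrow> distr M ?S (Ts i) = distr M ?S T" "indep_vars (\<lambda>_. ?S) Ts {..<n}" for i
    using ident indep unfolding T_def Ts_def by auto
  have S: "S = smean n (\<lambda>i \<omega>. lin (Ts i \<omega>))"
    unfolding S_def smean_def lin_def Ts_def
    by (simp add: fun_eq_iff sum.distrib sum_distrib_left add_divide_distrib)
  show "square_integrable M S"
    unfolding S by (rule square_integrable_smean_iid[OF T Ts iid lin sq_lin n])
  show "var M S = var M (\<lambda>\<omega>. a * A \<omega> + b * B \<omega> + c * C \<omega> + d * D \<omega>) / n"
    unfolding S lin_T[symmetric] by (rule var_smean_iid[OF T Ts iid lin sq_lin n])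
  have "expect M S = expect M (\<lambda>\<omega>. a * A \<omega> + b * B \<omega> + c * C \<omega> + d * D \<omega>)"
    unfolding S lin_T[symmetric] by (rule expect_smean_iid[OF T Ts iid lin sq_lin n])
  then show "expect M S = a * expect M A + b * expect M B + c * expect M C + d * expect M D"
    using sq by (simp add: expect_def square_integrable_integrable)
qed

lemma Phi_control_variates:
  fixes A B C D :: "'a \<Rightarrow> real" and As Bs Cs Ds :: "nat \<Rightarrow> 'a \<Rightarrow> real"
  assumes sq: "square_integrable M A" "square_integrable M B" "square_integrable M C" "square_integrable M D"
    and meas_copies: "\<And>i. i < n \<Longrightarrow> As i \<in> borel_measurable M \<and> Bs i \<in> borel_measurable M
                                 \<and> Cs i \<in> borel_measurable M \<and> Ds i \<in> borel_measurable M"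
    and indep: "indep_vars (\<lambda>i. borel \<Otimes>\<^sub>M borel \<Otimes>\<^sub>M borel \<Otimes>\<^sub>M borel)
                  (\<lambda>i \<omega>. (As i \<omega>, Bs i \<omega>, Cs i \<omega>, Ds i \<omega>)) {..<n}"
    and ident: "\<And>i. i < n \<Longrightarrow>
                  distr M (borel \<Otimes>\<^sub>M borel \<Otimes>\<^sub>M borel \<Otimes>\<^sub>M borel) (\<lambda>\<omega>. (As i \<omega>, Bs i \<omega>, Cs i \<omega>, Ds i \<omega>))
                = distr M (borel \<Otimes>\<^sub>M borel \<Otimes>\<^sub>M borel \<Otimes>\<^sub>M borel) (\<lambda>\<omega>. (A \<omega>, B \<omega>, C \<omega>, D \<omega>))"
    and n: "n \<ge> 1" and EC: "expect M C \<noteq> 0"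
  defines "R \<equiv> expect M A / expect M C"
  shows "Phi M (\<lambda>\<omega>. smean n As \<omega> + \<alpha> * (expect M B - smean n Bs \<omega>))
               (\<lambda>\<omega>. smean n Cs \<omega> + \<beta> * (expect M D - smean n Ds \<omega>))
         = var M (\<lambda>\<omega>. A \<omega> - R * C \<omega> - \<alpha> * B \<omega> + R * \<beta> * D \<omega>) / (real n * (expect M C)^2)"
proof -
  note lc = smean_linear_combination_iid[OF sq meas_copies indep ident n]
  have int_lc: "integrable M (\<lambda>\<omega>. a * smean n As \<omega> + b * smean n Bs \<omega> + c * smean n Cs \<omega> + d * smean n Ds \<omega>)"
    for a b c d
    using lc(1) by (rule square_integrable_integrable)
  define N where "N = (\<lambda>\<omega>. smean n As \<omega> + \<alpha> * (expect M B - smean n Bs \<omega>))"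
  define Mb where "Mb = (\<lambda>\<omega>. smean n Cs \<omega> + \<beta> * (expect M D - smean n Ds \<omega>))"
  have N: "N = (\<lambda>\<omega>. (1 * smean n As \<omega> + - \<alpha> * smean n Bs \<omega> + 0 * smean n Cs \<omega> + 0 * smean n Ds \<omega>)
      + \<alpha> * expect M B)"
    by (simp add: N_def fun_eq_iff algebra_simps)
  have Mb: "Mb = (\<lambda>\<omega>. (0 * smean n As \<omega> + 0 * smean n Bs \<omega> + 1 * smean n Cs \<omega> + - \<beta> * smean n Ds \<omega>)
      + \<beta> * expect M D)"
    by (simp add: Mb_def fun_eq_iff algebra_simps)
  have residual: "(\<lambda>\<omega>. N \<omega> - R * Mb \<omega>) =
      (\<lambda>\<omega>. (1 * smean n As \<omega> + - \<alpha> * smean n Bs \<omega> + - R * smean n Cs \<omega> + R * \<beta> * smean n Ds \<omega>)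
            + (\<alpha> * expect M B - R * \<beta> * expect M D))"
    by (simp add: N_def Mb_def fun_eq_iff algebra_simps)
  have sq_N: "square_integrable M N"
    unfolding N by (rule square_integrable_add[OF lc(1) square_integrable_const])
  have sq_Mb: "square_integrable M Mb"
    unfolding Mb by (rule square_integrable_add[OF lc(1) square_integrable_const])
  have EN: "expect M N = expect M A" and EMb: "expect M Mb = expect M C"
    by (simp_all only: N Mb expect_add_const[OF int_lc] lc(2))
  have "Phi M N Mb = var M (\<lambda>\<omega>. N \<omega> - R * Mb \<omega>) / (expect M C)^2"
    using Phi_eq_var_residual[OF sq_N sq_Mb] EN EMb EC by (simp add: R_def)
  also have "var M (\<lambda>\<omega>. N \<omega> - R * Mb \<omega>) = var M (\<lambda>\<omega>. A \<omega> - R * C \<omega> - \<alpha> * B \<omega> + R * \<beta> * D \<omega>) / n"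
    by (simp only: residual var_add_const[OF int_lc] lc(3)) (simp add: algebra_simps)
  finally show ?thesis
    unfolding N_def Mb_def by simp
qed

end

theorem mainTheorem5:
  fixes M :: "'a measure"
    and A B C D :: "'a \<Rightarrow> real"
    and As Bs Cs Ds :: "nat \<Rightarrow> 'a \<Rightarrow> real"
    and n :: nat
  assumes "prob_space M"
    and meas: "A \<in> borel_measurable M" "B \<in> borel_measurable M"
              "C \<in> borel_measurable M" "D \<in> borel_measurable M"
    and sq: "integrable M (\<lambda>\<omega>. (A \<omega>)^2)" "integrable M (\<lambda>\<omega>. (B \<omega>)^2)"
            "integrable M (\<lambda>\<omega>. (C \<omega>)^2)" "integrable M (\<lambda>\<omega>. (D \<omega>)^2)"
    and varB: "var M B > 0" and varD: "var M D > 0"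
    and corrBD: "\<bar>corr M B D\<bar> < 1"
    and EA: "expect M A \<noteq> 0" and EC: "expect M C \<noteq> 0"
    and n: "n \<ge> 1"
    and meas_copies: "\<And>i. i < n \<Longrightarrow> As i \<in> borel_measurable M \<and> Bs i \<in> borel_measurable M
                                 \<and> Cs i \<in> borel_measurable M \<and> Ds i \<in> borel_measurable M"
    and indep: "prob_space.indep_vars M (\<lambda>i. borel \<Otimes>\<^sub>M borel \<Otimes>\<^sub>M borel \<Otimes>\<^sub>M borel)
                  (\<lambda>i \<omega>. (As i \<omega>, Bs i \<omega>, Cs i \<omega>, Ds i \<omega>)) {..<n}"
    and ident: "\<And>i. i < n \<Longrightarrow>
                  distr M (borel \<Otimes>\<^sub>M borel \<Otimes>\<^sub>M borel \<Otimes>\<^sub>M borel) (\<lambda>\<omega>. (As i \<omega>, Bs i \<omega>, Cs i \<omega>, Ds i \<omega>))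
                = distr M (borel \<Otimes>\<^sub>M borel \<Otimes>\<^sub>M borel \<Otimes>\<^sub>M borel) (\<lambda>\<omega>. (A \<omega>, B \<omega>, C \<omega>, D \<omega>))"
  defines "N \<equiv> (\<lambda>\<alpha> \<omega>. smean n As \<omega> + \<alpha> * (expect M B - smean n Bs \<omega>))"
    and "Mb \<equiv> (\<lambda>\<beta> \<omega>. smean n Cs \<omega> + \<beta> * (expect M D - smean n Ds \<omega>))"
    and "\<alpha>\<^sub>o \<equiv> (var M D * cov M A B - (expect M A / expect M C) * var M D * cov M B C
                 + (expect M A / expect M C) * cov M B D * cov M C D - cov M B D * cov M A D)
               / (var M B * var M D - (cov M B D)^2)"
    and "\<beta>\<^sub>o \<equiv> (cov M B D * cov M A B - (expect M A / expect M C) * cov M B D * cov M B C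
                 + (expect M A / expect M C) * var M B * cov M C D - var M B * cov M A D)
               / ((expect M A / expect M C) * (var M B * var M D - (cov M B D)^2))"
  shows "{p :: real \<times> real. \<forall>q :: real \<times> real.
             Phi M (N (fst p)) (Mb (snd p)) \<le> Phi M (N (fst q)) (Mb (snd q))} = {(\<alpha>\<^sub>o, \<beta>\<^sub>o)}
         \<and> Phi M (N \<alpha>\<^sub>o) (Mb \<beta>\<^sub>o) \<le> Phi M (smean n As) (smean n Cs)"
proof -
  interpret prob_space M by fact
  have sq': "square_integrable M A" "square_integrable M B" "square_integrable M C" "square_integrable M D"
    using meas sq unfolding square_integrable_def by simp_all
  have "(cov M B D)^2 < var M B * var M D"
    using varB varD corrBD by (rule cov_sq_less_if_abs_corr_less)
  note opt = optimal_control_variates[OF sq' varB this EA EC, folded \<alpha>\<^sub>o_def \<beta>\<^sub>o_def]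
  let ?R = "expect M A / expect M C"
  have Phi_eq: "Phi M (N \<alpha>) (Mb \<beta>) =
      var M (\<lambda>\<omega>. A \<omega> - ?R * C \<omega> - \<alpha> * B \<omega> + ?R * \<beta> * D \<omega>) / (real n * (expect M C)^2)" for \<alpha> \<beta>
    unfolding N_def Mb_def by (rule Phi_control_variates[OF sq' meas_copies indep ident n EC])
  have K: "real n * (expect M C)^2 > 0"
    using n EC by simp
  have "{p. \<forall>q. Phi M (N (fst p)) (Mb (snd p)) \<le> Phi M (N (fst q)) (Mb (snd q))} = {(\<alpha>\<^sub>o, \<beta>\<^sub>o)}"
  proof (rule Collect_minimizers_eq_singleton)
    fix q :: "real \<times> real"
    show "Phi M (N (fst (\<alpha>\<^sub>o, \<beta>\<^sub>o))) (Mb (snd (\<alpha>\<^sub>o, \<beta>\<^sub>o))) \<le> Phi M (N (fst q)) (Mb (snd q))"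
      using opt(1)[of "fst q" "snd q"] K by (simp add: Phi_eq divide_right_mono)
    show "Phi M (N (fst q)) (Mb (snd q)) \<le> Phi M (N (fst (\<alpha>\<^sub>o, \<beta>\<^sub>o))) (Mb (snd (\<alpha>\<^sub>o, \<beta>\<^sub>o)))
        \<Longrightarrow> q = (\<alpha>\<^sub>o, \<beta>\<^sub>o)"
      using opt(2)[of "fst q" "snd q"] K by (cases q) (simp add: Phi_eq divide_le_cancel)
  qed
  moreover have "Phi M (N \<alpha>\<^sub>o) (Mb \<beta>\<^sub>o) \<le> Phi M (N 0) (Mb 0)"
    using opt(1)[of 0 0] K by (simp add: Phi_eq divide_right_mono)
  moreover have "N 0 = smean n As" "Mb 0 = smean n Cs"
    by (simp_all add: N_def Mb_def)
  ultimately show ?thesis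
    by simp
qed

end
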